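(* Let $P\in\mathbb{C}[y]$ with $\deg P\geq 2$, let $\delta\in\mathbb{C}\setminus\{0\}$, and let $h_1:\mathbb{C}^2\to\mathbb{C}^2$ be the generalized Hénon map $h_1(x,y)=(y,P(y)-\delta x)$. Let $\theta\in(0,2\pi)\setminus\{\frac{\pi}{2},\pi,\frac{3\pi}{2}\}$, let $R_\theta:\mathbb{C}^2\to\mathbb{C}^2$ be the linear map with matrix $\begin{pmatrix}\cos\theta&-\sin\theta\\ \sin\theta&\cos\theta\end{pmatrix}$, let $h_2=R_\theta^{-1}\circ h_1\circ R_\theta$, and let $G=\langle h_1,h_2\rangle$ be the group of holomorphic automorphisms of $\mathbb{C}^2$ generated by $h_1,h_2$. Then there is a nonempty unbounded open set $U\subset\mathcal{F}(G)$ such that for every $(x,y)\in U$ and every sequence $\omega=(\omega_n)_{n\in\mathbb{N}}\in\{h_1,h_2,h_1^{-1},h_2^{-1}\}^{\mathbb{N}}$ for which the reduced word length of $S_k(\omega):=\omega_k\circ\omega_{k-1}\circ\cdots\circ\omega_1$ tends to $\infty$ as $k\to\infty$, we have $\|S_k(\omega)(x,y)\|\to\infty$ as $k\to\infty$.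
   Context: A family $\mathcal{A}$ of holomorphic maps $X\to Y$ is normal if every sequence in $\mathcal{A}$ has a subsequence that either converges uniformly on compact subsets or diverges properly (locally uniformly) to infinity. The Fatou set $\mathcal{F}(G)\subset\mathbb{C}^2$ of $G$ is the largest open subset of $\mathbb{C}^2$ on which the family $G$ (viewed as maps $\mathbb{C}^2\to\mathbb{C}^2$) is normal. The length of $S_k(\omega)$ is its length as a reduced word in the letters $h_1^{\pm1},h_2^{\pm1}$ (after cancelling adjacent inverse pairs). *)

theory Defs
  imports "HOL-Analysis.Analysis" "HOL-Computational_Algebra.Polynomial"
begin

type_synonym C2 = "complex \<times> complex"

definition henon :: "complex poly \<Rightarrow> complex \<Rightarrow> C2 \<Rightarrow> C2" where
  "henon P \<delta> = (\<lambda>(x, y). (y, poly P y - \<delta> * x))"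

definition rot :: "real \<Rightarrow> C2 \<Rightarrow> C2" where
  "rot \<theta> = (\<lambda>(x, y). (complex_of_real (cos \<theta>) * x - complex_of_real (sin \<theta>) * y,
                      complex_of_real (sin \<theta>) * x + complex_of_real (cos \<theta>) * y))"

definition henon2 :: "complex poly \<Rightarrow> complex \<Rightarrow> real \<Rightarrow> C2 \<Rightarrow> C2" where
  "henon2 P \<delta> \<theta> = inv (rot \<theta>) \<circ> henon P \<delta> \<circ> rot \<theta>"

inductive_set gen_group :: "('a \<Rightarrow> 'a) \<Rightarrow> ('a \<Rightarrow> 'a) \<Rightarrow> ('a \<Rightarrow> 'a) set"
  for f g :: "'a \<Rightarrow> 'a" where
  gen_id: "id \<in> gen_group f g"
| gen_f: "h \<in> gen_group f g \<Longrightarrow> f \<circ> h \<in> gen_group f g"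
| gen_finv: "h \<in> gen_group f g \<Longrightarrow> inv f \<circ> h \<in> gen_group f g"
| gen_g: "h \<in> gen_group f g \<Longrightarrow> g \<circ> h \<in> gen_group f g"
| gen_ginv: "h \<in> gen_group f g \<Longrightarrow> inv g \<circ> h \<in> gen_group f g"

definition normal_family_on :: "('a::metric_space \<Rightarrow> 'b::real_normed_vector) set \<Rightarrow> 'a set \<Rightarrow> bool" where
  "normal_family_on A W \<longleftrightarrow>
     (\<forall>f::nat \<Rightarrow> 'a \<Rightarrow> 'b. (\<forall>n. f n \<in> A) \<longrightarrow>
        (\<exists>r. strict_mono r \<and>
           ((\<exists>g. \<forall>K. compact K \<and> K \<subseteq> W \<longrightarrow> uniform_limit K (\<lambda>n. f (r n)) g sequentially)
            \<or> (\<forall>K. compact K \<and> K \<subseteq> W \<longrightarrow>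
                  (\<forall>M. eventually (\<lambda>n. \<forall>z\<in>K. norm (f (r n) z) \<ge> M) sequentially)))))"

definition fatou_set :: "('a::metric_space \<Rightarrow> 'b::real_normed_vector) set \<Rightarrow> 'a set" where
  "fatou_set A = \<Union>{W. open W \<and> normal_family_on A W}"

datatype letter = H1 | H2 | H1inv | H2inv

fun letter_inverse :: "letter \<Rightarrow> letter" where
  "letter_inverse H1 = H1inv"
| "letter_inverse H1inv = H1"
| "letter_inverse H2 = H2inv"
| "letter_inverse H2inv = H2"

fun reduce_word :: "letter list \<Rightarrow> letter list" where
  "reduce_word [] = []"
| "reduce_word (a # w) =
     (case reduce_word w of
        [] \<Rightarrow> [a]
      | b # v \<Rightarrow> (if b = letter_inverse a then v else a # b # v))"

definition letter_map :: "complex poly \<Rightarrow> complex \<Rightarrow> real \<Rightarrow> letter \<Rightarrow> C2 \<Rightarrow> C2" where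
  "letter_map P \<delta> \<theta> l = (case l of
      H1 \<Rightarrow> henon P \<delta>
    | H2 \<Rightarrow> henon2 P \<delta> \<theta>
    | H1inv \<Rightarrow> inv (henon P \<delta>)
    | H2inv \<Rightarrow> inv (henon2 P \<delta> \<theta>))"

text \<open>The word of S_k(omega) = omega_k o ... o omega_1 (here omega_i is omega (i-1)),
  written left to right.\<close>
definition S_word :: "(nat \<Rightarrow> letter) \<Rightarrow> nat \<Rightarrow> letter list" where
  "S_word \<omega> k = rev (map \<omega> [0..<k])"

fun S_map :: "complex poly \<Rightarrow> complex \<Rightarrow> real \<Rightarrow> (nat \<Rightarrow> letter) \<Rightarrow> nat \<Rightarrow> C2 \<Rightarrow> C2" where
  "S_map P \<delta> \<theta> \<omega> 0 = id"
| "S_map P \<delta> \<theta> \<omega> (Suc k) = letter_map P \<delta> \<theta> (\<omega> k) \<circ> S_map P \<delta> \<theta> \<omega> k"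

end

(*
  Ping-pong in cones. In a suitable linear chart (the identity, the swap (x, y) |-> (y, x),
  the rotation R_theta, or the swap after R_theta) each of h1, h2, h1^-1, h2^-1 is a Henon map
  (x, y) |-> (y, Q(y) - D x): the inverse of a Henon map is conjugate to one by the swap.
  Far from the origin a Henon map sends the wide cone |x| <= K |y| into the narrow cone
  |x| <= e |y| and at least doubles the norm. Since theta is not a multiple of pi/2, the change
  between the charts of two letters that are not mutually inverse is a linear map without zero
  entries, and so it carries the narrow cone of one letter into the wide cone of the other.
  Hence on the open set of points lying in the wide cone of every chart, a reduced word of
  length n expands norms by 2^n. This gives the escape of S_k(omega), and normality: a sequence
  in G either tends to infinity uniformly on that set, or infinitely many of its terms have
  bounded reduced length, so that one of them occurs infinitely often.
*)
theory Submission
  imports Defs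
begin

section \<open>Henon maps, rotations and charts\<close>

definition swap :: "C2 \<Rightarrow> C2" where
  "swap = (\<lambda>(x, y). (y, x))"

lemma swap_swap [simp]: "swap (swap z) = z"
  by (cases z) (simp add: swap_def)

lemma norm_swap [simp]: "norm (swap z) = norm z"
  by (cases z) (simp add: swap_def norm_Pair add.commute)

lemma henon_inverse_comp:
  assumes "\<delta> \<noteq> 0"
  shows "henon P \<delta> \<circ> (swap \<circ> henon (smult (1 / \<delta>) P) (1 / \<delta>) \<circ> swap) = id"
    and "(swap \<circ> henon (smult (1 / \<delta>) P) (1 / \<delta>) \<circ> swap) \<circ> henon P \<delta> = id"
proof (rule_tac [!] ext)
  fix z :: C2
  show "(henon P \<delta> \<circ> (swap \<circ> henon (smult (1 / \<delta>) P) (1 / \<delta>) \<circ> swap)) z = id z"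
    "((swap \<circ> henon (smult (1 / \<delta>) P) (1 / \<delta>) \<circ> swap) \<circ> henon P \<delta>) z = id z"
    using assms by (cases z; simp add: henon_def swap_def field_simps)+
qed

lemma inv_henon:
  assumes "\<delta> \<noteq> 0"
  shows "inv (henon P \<delta>) = swap \<circ> henon (smult (1 / \<delta>) P) (1 / \<delta>) \<circ> swap"
  by (rule inv_unique_comp[OF henon_inverse_comp[OF assms]])

lemma bij_henon:
  assumes "\<delta> \<noteq> 0"
  shows "bij (henon P \<delta>)"
  using henon_inverse_comp[OF assms] by (rule o_bij[rotated])

lemma rot_uminus_rot [simp]: "rot (- \<theta>) (rot \<theta> z) = z"
proof (cases z)
  case (Pair x y)
  define c s where "c = complex_of_real (cos \<theta>)" and "s = complex_of_real (sin \<theta>)"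
  have cs: "c * c + s * s = 1"
    unfolding c_def s_def by (metis of_real_1 of_real_add of_real_mult sin_cos_squared_add3)
  have "rot (- \<theta>) (rot \<theta> (x, y)) = ((c * c + s * s) * x, (c * c + s * s) * y)"
    by (simp add: rot_def c_def s_def algebra_simps)
  then show ?thesis using Pair cs by simp
qed

lemma rot_rot_uminus [simp]: "rot \<theta> (rot (- \<theta>) z) = z"
  using rot_uminus_rot[of "- \<theta>"] by simp

lemma inv_rot: "inv (rot \<theta>) = rot (- \<theta>)"
  by (rule inv_unique_comp) (simp_all add: fun_eq_iff)

lemma bij_rot: "bij (rot \<theta>)"
  by (rule o_bij[of "rot (- \<theta>)"]) (simp_all add: fun_eq_iff)

lemma norm_rot [simp]: "norm (rot \<theta> z) = norm z"
proof (cases z)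
  case (Pair x y)
  have "(norm (complex_of_real (cos \<theta>) * x - complex_of_real (sin \<theta>) * y))\<^sup>2 +
        (norm (complex_of_real (sin \<theta>) * x + complex_of_real (cos \<theta>) * y))\<^sup>2
        = (cos \<theta>)\<^sup>2 * ((norm x)\<^sup>2 + (norm y)\<^sup>2) + (sin \<theta>)\<^sup>2 * ((norm x)\<^sup>2 + (norm y)\<^sup>2)"
    unfolding cmod_power2 by (simp add: power2_eq_square algebra_simps)
  also have "\<dots> = (norm x)\<^sup>2 + (norm y)\<^sup>2"
    by (simp flip: distrib_right)
  finally show ?thesis by (simp add: Pair rot_def norm_Pair)
qed

text \<open>(1, i) is a common eigenvector of all rotations, so the points (t, i t) lie on the
  diagonal |x| = |y| in every chart.\<close>

lemma rot_isotropic: "rot \<theta> (w, \<i> * w) = (cis (- \<theta>) * w, \<i> * (cis (- \<theta>) * w))"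
  by (simp add: rot_def complex_eq_iff algebra_simps)

lemma henon2_eq: "henon2 P \<delta> \<theta> = rot (- \<theta>) \<circ> henon P \<delta> \<circ> rot \<theta>"
  by (simp add: henon2_def inv_rot)

lemma inv_henon2:
  assumes "\<delta> \<noteq> 0"
  shows "inv (henon2 P \<delta> \<theta>) = rot (- \<theta>) \<circ> inv (henon P \<delta>) \<circ> rot \<theta>"
proof -
  have "bij (rot (- \<theta>) \<circ> henon P \<delta>)"
    using assms by (simp add: bij_comp bij_rot bij_henon)
  then show ?thesis
    using assms by (simp add: henon2_eq o_inv_distrib bij_rot bij_henon inv_rot o_assoc)
qed

definition chart :: "real \<Rightarrow> letter \<Rightarrow> C2 \<Rightarrow> C2" where
  "chart \<theta> l = (case l of H1 \<Rightarrow> id | H2 \<Rightarrow> rot \<theta> | H1inv \<Rightarrow> swap | H2inv \<Rightarrow> swap \<circ> rot \<theta>)"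

lemma norm_chart [simp]: "norm (chart \<theta> l z) = norm z"
  by (cases l) (simp_all add: chart_def)

lemma chart_letter_map:
  assumes "\<delta> \<noteq> 0"
  obtains Q D where "(Q, D) \<in> {(P, \<delta>), (smult (1 / \<delta>) P, 1 / \<delta>)}"
    and "\<And>z. chart \<theta> l (letter_map P \<delta> \<theta> l z) = henon Q D (chart \<theta> l z)"
proof (cases l)
  case H1
  then show ?thesis using that[of P \<delta>] by (simp add: chart_def letter_map_def)
next
  case H2
  then show ?thesis using that[of P \<delta>] by (simp add: chart_def letter_map_def henon2_eq)
next
  case H1inv
  then show ?thesis using that[of "smult (1 / \<delta>) P" "1 / \<delta>"] assms
    by (simp add: chart_def letter_map_def inv_henon)
next
  case H2inv
  then show ?thesis using that[of "smult (1 / \<delta>) P" "1 / \<delta>"] assms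
    by (simp add: chart_def letter_map_def inv_henon2 inv_henon)
qed

section \<open>Cone estimates\<close>

definition vert_cone :: "real \<Rightarrow> real \<Rightarrow> C2 set" where
  "vert_cone K r = {z. norm (fst z) \<le> K * norm (snd z) \<and> r \<le> norm z}"

lemma vert_cone_mono:
  assumes "e \<le> K"
  shows "vert_cone e r \<subseteq> vert_cone K r"
proof
  fix z assume "z \<in> vert_cone e r"
  moreover have "e * norm (snd z) \<le> K * norm (snd z)"
    using assms by (simp add: mult_right_mono)
  ultimately show "z \<in> vert_cone K r"
    by (auto simp: vert_cone_def)
qed

lemma poly_superlinear:
  fixes Q :: "'a::real_normed_field poly"
  assumes "degree Q \<ge> 2"
  shows "eventually (\<lambda>y. B * norm y \<le> norm (poly Q y)) at_infinity"
proof -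
  obtain a Q1 where Q: "Q = pCons a Q1" by (cases Q)
  have "degree Q1 > 0" using assms Q by (cases "Q1 = 0") auto
  then have "filterlim (\<lambda>y. norm (poly Q1 y)) at_top at_infinity"
    using filterlim_at_infinity_imp_norm_at_top filterlim_poly_at_infinity by blast
  then have "eventually (\<lambda>y. B + norm a \<le> norm (poly Q1 y) \<and> 1 \<le> norm y) at_infinity"
    by (intro eventually_conj) (auto simp: filterlim_at_top eventually_at_infinity)
  then show ?thesis
  proof eventually_elim
    case (elim y)
    have "norm a \<le> norm a * norm y"
      using elim mult_left_mono[of 1 "norm y" "norm a"] by simp
    then have "B * norm y + norm a \<le> (B + norm a) * norm y"
      by (simp add: algebra_simps)
    also have "\<dots> \<le> norm (y * poly Q1 y)"
      using elim by (simp add: norm_mult mult.commute mult_left_mono)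
    also have "\<dots> \<le> norm (poly Q y) + norm a"
      using norm_triangle_ineq4[of "poly Q y" a] by (simp add: Q)
    finally show ?case by simp
  qed
qed

lemma henon_vert_cone_step:
  fixes Q :: "complex poly"
  assumes "0 < K" and "0 < e"
    and growth: "\<And>y. r \<le> (K + 1) * norm y \<Longrightarrow>
                   (1 / e + 2 * (K + 1) + norm D * K) * norm y \<le> norm (poly Q y)"
    and "z \<in> vert_cone K r"
  shows "henon Q D z \<in> vert_cone e r \<and> 2 * norm z \<le> norm (henon Q D z)"
proof (cases z)
  case (Pair x y)
  then have x: "norm x \<le> K * norm y" and "r \<le> norm (x, y)"
    using assms(4) by (auto simp: vert_cone_def)
  moreover have "norm (x, y) \<le> (K + 1) * norm y"
    using norm_Pair_le[of x y] x by (simp add: algebra_simps)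
  ultimately have r_y: "r \<le> (K + 1) * norm y" and z_y: "norm (x, y) \<le> (K + 1) * norm y"
    by simp_all
  from r_y have "(1 / e + 2 * (K + 1) + norm D * K) * norm y \<le> norm (poly Q y)"
    by (rule growth)
  moreover have "norm (D * x) \<le> norm D * K * norm y"
    using x by (simp add: norm_mult mult_left_mono mult.assoc)
  moreover have "norm (poly Q y) - norm (D * x) \<le> norm (poly Q y - D * x)"
    by (rule norm_triangle_ineq2)
  moreover have "0 \<le> norm y / e" "0 \<le> 2 * ((K + 1) * norm y)"
    using \<open>0 < e\<close> \<open>0 < K\<close> by simp_all
  ultimately have far: "norm y / e \<le> norm (poly Q y - D * x)"
    "2 * ((K + 1) * norm y) \<le> norm (poly Q y - D * x)"
    by (simp_all add: algebra_simps)
  have narrow: "norm y \<le> e * norm (poly Q y - D * x)"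
    using far(1) \<open>0 < e\<close> by (simp add: pos_divide_le_eq mult.commute)
  have "2 * norm (x, y) \<le> norm (poly Q y - D * x)"
    using far(2) z_y by linarith
  also have "\<dots> \<le> norm (henon Q D (x, y))"
    by (simp add: henon_def norm_snd_le)
  finally have double: "2 * norm (x, y) \<le> norm (henon Q D (x, y))" .
  moreover have "r \<le> norm (henon Q D (x, y))"
    using double \<open>r \<le> norm (x, y)\<close> norm_ge_zero[of "(x, y)"] by linarith
  ultimately show ?thesis
    using narrow Pair by (auto simp: vert_cone_def henon_def)
qed

lemma eventually_henon_vert_cone_step:
  fixes Q :: "complex poly"
  assumes "degree Q \<ge> 2" and "0 < K" and "0 < e"
  shows "eventually (\<lambda>r. \<forall>z \<in> vert_cone K r.
           henon Q D z \<in> vert_cone e r \<and> 2 * norm z \<le> norm (henon Q D z)) at_top"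
proof -
  obtain Y where Y: "\<And>y. Y \<le> norm y \<Longrightarrow> (1 / e + 2 * (K + 1) + norm D * K) * norm y \<le> norm (poly Q y)"
    using poly_superlinear[OF assms(1)] by (auto simp: eventually_at_infinity)
  have "Y \<le> norm y" if "(K + 1) * Y \<le> r" and "r \<le> (K + 1) * norm y" for r y
    using that \<open>0 < K\<close> by (smt (verit) mult_le_cancel_left_pos)
  then show ?thesis
    using henon_vert_cone_step[OF assms(2,3)] Y
    by (intro eventually_at_top_linorderI[of "(K + 1) * Y"]) blast
qed

definition lin2 :: "real \<Rightarrow> real \<Rightarrow> real \<Rightarrow> real \<Rightarrow> C2 \<Rightarrow> C2" where
  "lin2 a b c d = (\<lambda>(x, y). (of_real a * x + of_real b * y, of_real c * x + of_real d * y))"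

lemma lin2_vert_cone:
  assumes "0 < m" and "\<bar>a\<bar> \<le> 1" "\<bar>b\<bar> \<le> 1" "\<bar>c\<bar> \<le> 1" "m \<le> \<bar>d\<bar>"
    and "w \<in> vert_cone (m / 2) r" and "norm (lin2 a b c d w) = norm w"
  shows "lin2 a b c d w \<in> vert_cone (1 + 2 / m) r"
proof (cases w)
  case (Pair x y)
  have x: "norm x \<le> m / 2 * norm y" and r: "r \<le> norm w"
    using assms(6) Pair by (auto simp: vert_cone_def)
  have "norm (of_real a * x + of_real b * y) \<le> \<bar>a\<bar> * norm x + \<bar>b\<bar> * norm y"
    using norm_triangle_ineq[of "of_real a * x" "of_real b * y"] by (simp add: norm_mult)
  also have "\<dots> \<le> norm x + norm y"
    using assms(2,3) by (intro add_mono mult_left_le_one_le) auto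
  also have "\<dots> \<le> (1 + 2 / m) * (m / 2 * norm y)"
    using x \<open>0 < m\<close> by (simp add: algebra_simps)
  finally have fst_le: "norm (of_real a * x + of_real b * y) \<le> (1 + 2 / m) * (m / 2 * norm y)" .
  have "\<bar>c\<bar> * norm x \<le> m / 2 * norm y"
    using x assms(4) by (meson mult_left_le_one_le norm_ge_zero order_trans abs_ge_zero)
  moreover have "m * norm y \<le> \<bar>d\<bar> * norm y"
    using assms(5) by (simp add: mult_right_mono)
  moreover have "\<bar>d\<bar> * norm y - \<bar>c\<bar> * norm x \<le> norm (of_real c * x + of_real d * y)"
    using norm_diff_ineq[of "of_real d * y" "of_real c * x"] by (simp add: norm_mult add.commute)
  ultimately have "m / 2 * norm y \<le> norm (of_real c * x + of_real d * y)"
    by linarith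
  then have "(1 + 2 / m) * (m / 2 * norm y) \<le> (1 + 2 / m) * norm (of_real c * x + of_real d * y)"
    using \<open>0 < m\<close> by (intro mult_left_mono) auto
  then show ?thesis
    using fst_le r assms(7) Pair by (simp add: vert_cone_def lin2_def)
qed

lemma chart_transitions:
  fixes \<theta> :: real
  defines "c \<equiv> cos \<theta>" and "s \<equiv> sin \<theta>"
  shows "chart \<theta> H2 z = lin2 c (- s) s c (chart \<theta> H1 z)"
    and "chart \<theta> H2inv z = lin2 s c c (- s) (chart \<theta> H1 z)"
    and "chart \<theta> H2 z = lin2 (- s) c c s (chart \<theta> H1inv z)"
    and "chart \<theta> H2inv z = lin2 c s (- s) c (chart \<theta> H1inv z)"
    and "chart \<theta> H1 z = lin2 c s (- s) c (chart \<theta> H2 z)"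
    and "chart \<theta> H1inv z = lin2 (- s) c c s (chart \<theta> H2 z)"
    and "chart \<theta> H1 z = lin2 s c c (- s) (chart \<theta> H2inv z)"
    and "chart \<theta> H1inv z = lin2 c (- s) s c (chart \<theta> H2inv z)"
proof -
  have rot: "rot \<phi> = lin2 (cos \<phi>) (- sin \<phi>) (sin \<phi>) (cos \<phi>)" for \<phi>
    by (simp add: rot_def lin2_def)
  have swap_lin2: "swap (lin2 a b c' d w) = lin2 c' d a b w"
    and lin2_swap: "lin2 a b c' d (swap w) = lin2 b a d c' w" for a b c' d w
    by (simp_all add: swap_def lin2_def case_prod_unfold add.commute)
  show "chart \<theta> H2 z = lin2 c (- s) s c (chart \<theta> H1 z)"
    "chart \<theta> H2inv z = lin2 s c c (- s) (chart \<theta> H1 z)"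
    "chart \<theta> H2 z = lin2 (- s) c c s (chart \<theta> H1inv z)"
    "chart \<theta> H2inv z = lin2 c s (- s) c (chart \<theta> H1inv z)"
    by (simp_all add: chart_def rot c_def s_def swap_lin2 lin2_swap)
  have "chart \<theta> H1 (rot (- \<theta>) w) = lin2 c s (- s) c (chart \<theta> H2 (rot (- \<theta>) w))"
    "chart \<theta> H1inv (rot (- \<theta>) w) = lin2 (- s) c c s (chart \<theta> H2 (rot (- \<theta>) w))"
    "chart \<theta> H1 (rot (- \<theta>) w) = lin2 s c c (- s) (chart \<theta> H2inv (rot (- \<theta>) w))"
    "chart \<theta> H1inv (rot (- \<theta>) w) = lin2 c (- s) s c (chart \<theta> H2inv (rot (- \<theta>) w))" for w
    by (simp_all only: chart_def letter.case id_apply comp_apply rot_rot_uminus)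
      (simp_all add: rot c_def s_def swap_lin2 lin2_swap)
  from this[of "rot \<theta> z"]
  show "chart \<theta> H1 z = lin2 c s (- s) c (chart \<theta> H2 z)"
    "chart \<theta> H1inv z = lin2 (- s) c c s (chart \<theta> H2 z)"
    "chart \<theta> H1 z = lin2 s c c (- s) (chart \<theta> H2inv z)"
    "chart \<theta> H1inv z = lin2 c (- s) s c (chart \<theta> H2inv z)"
    by simp_all
qed

text \<open>All entries of the chart transitions are +-cos theta or +-sin theta; their being nonzero is
  the only use of theta not being a multiple of pi/2.\<close>

lemma chart_vert_cone_transfer:
  assumes "0 < m" "m \<le> \<bar>cos \<theta>\<bar>" "m \<le> \<bar>sin \<theta>\<bar>" and "b \<noteq> letter_inverse a"
    and "chart \<theta> b z \<in> vert_cone (m / 2) r"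
  shows "chart \<theta> a z \<in> vert_cone (1 + 2 / m) r"
proof -
  have "m \<le> 1"
    using assms(2) abs_cos_le_one order_trans by blast
  then have "m / 2 \<le> 1 + 2 / m"
    using \<open>0 < m\<close> by (simp add: add_increasing2)
  then have same: "chart \<theta> a z \<in> vert_cone (1 + 2 / m) r" if "a = b"
    using that assms(5) vert_cone_mono by blast
  have transfer: "chart \<theta> a' z \<in> vert_cone (1 + 2 / m) r"
    if "chart \<theta> a' z = lin2 p q u v (chart \<theta> b' z)" and "\<bar>p\<bar> \<le> 1" "\<bar>q\<bar> \<le> 1" "\<bar>u\<bar> \<le> 1"
      "m \<le> \<bar>v\<bar>" "chart \<theta> b' z \<in> vert_cone (m / 2) r"
    for a' b' p q u v
  proof -
    have "norm (lin2 p q u v (chart \<theta> b' z)) = norm (chart \<theta> b' z)"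
      using that(1) norm_chart by metis
    then show ?thesis
      using lin2_vert_cone[OF \<open>0 < m\<close> that(2-6)] that(1) by simp
  qed
  show ?thesis
    using assms(2-5) same abs_cos_le_one[of \<theta>] abs_sin_le_one[of \<theta>]
    by (cases a; cases b)
      (auto intro: transfer[OF chart_transitions(1)] transfer[OF chart_transitions(2)]
        transfer[OF chart_transitions(3)] transfer[OF chart_transitions(4)]
        transfer[OF chart_transitions(5)] transfer[OF chart_transitions(6)]
        transfer[OF chart_transitions(7)] transfer[OF chart_transitions(8)])
qed

lemma letter_map_vert_cone_step:
  assumes "\<delta> \<noteq> 0"
    and henon_step: "\<And>Q D z. (Q, D) \<in> {(P, \<delta>), (smult (1 / \<delta>) P, 1 / \<delta>)} \<Longrightarrow> z \<in> vert_cone K r \<Longrightarrow>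
       henon Q D z \<in> vert_cone e r \<and> 2 * norm z \<le> norm (henon Q D z)"
    and "chart \<theta> l z \<in> vert_cone K r"
  shows "chart \<theta> l (letter_map P \<delta> \<theta> l z) \<in> vert_cone e r \<and> 2 * norm z \<le> norm (letter_map P \<delta> \<theta> l z)"
proof -
  obtain Q D where QD: "(Q, D) \<in> {(P, \<delta>), (smult (1 / \<delta>) P, 1 / \<delta>)}"
    and conj: "\<And>z. chart \<theta> l (letter_map P \<delta> \<theta> l z) = henon Q D (chart \<theta> l z)"
    using chart_letter_map[OF assms(1), where P = P and \<theta> = \<theta> and l = l] by blast
  have "norm (letter_map P \<delta> \<theta> l z) = norm (henon Q D (chart \<theta> l z))"
    by (metis conj norm_chart)
  then show ?thesis
    using henon_step[OF QD assms(3)] by (simp add: conj)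
qed

section \<open>Reduced words and ping-pong\<close>

fun word_map :: "(letter \<Rightarrow> 'a \<Rightarrow> 'a) \<Rightarrow> letter list \<Rightarrow> 'a \<Rightarrow> 'a" where
  "word_map f [] = id"
| "word_map f (a # w) = f a \<circ> word_map f w"

definition reduced :: "letter list \<Rightarrow> bool" where
  "reduced = successively (\<lambda>a b. b \<noteq> letter_inverse a)"

lemma reduced_reduce_word: "reduced (reduce_word w)"
proof (induction w)
  case Nil
  then show ?case by (simp add: reduced_def)
next
  case (Cons a w)
  then show ?case
    by (cases "reduce_word w") (auto simp: reduced_def successively_Cons)
qed

lemma word_map_reduce_word:
  assumes cancel: "\<And>a. f a \<circ> f (letter_inverse a) = id"
  shows "word_map f (reduce_word w) = word_map f w"
proof (induction w)
  case Nil
  then show ?case by simp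
next
  case (Cons a w)
  note IH = Cons.IH
  show ?case
  proof (cases "reduce_word w")
    case Nil
    then show ?thesis using IH[symmetric] by simp
  next
    case (Cons b v)
    then have w: "word_map f w = f b \<circ> word_map f v"
      using IH[symmetric] by (simp add: comp_def)
    show ?thesis
    proof (cases "b = letter_inverse a")
      case True
      then have "f a \<circ> (f b \<circ> word_map f v) = word_map f v"
        using cancel[of a] by (simp add: o_assoc)
      then show ?thesis using Cons True w by simp
    next
      case False
      then show ?thesis using Cons w by simp
    qed
  qed
qed

lemma ping_pong:
  fixes f :: "letter \<Rightarrow> 'a::real_normed_vector \<Rightarrow> 'a"
  assumes maps: "\<And>l z. z \<in> In l \<Longrightarrow> f l z \<in> Out l \<and> 2 * norm z \<le> norm (f l z)"
    and nested: "\<And>a b. b \<noteq> letter_inverse a \<Longrightarrow> Out b \<subseteq> In a"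
    and z: "\<And>l. z \<in> In l" and "reduced w"
  shows "2 ^ length w * norm z \<le> norm (word_map f w z)"
proof -
  have "(\<forall>a. w = [] \<or> hd w \<noteq> letter_inverse a \<longrightarrow> word_map f w z \<in> In a)
    \<and> 2 ^ length w * norm z \<le> norm (word_map f w z)"
    using \<open>reduced w\<close>
  proof (induction w)
    case Nil
    then show ?case using z by simp
  next
    case (Cons b v)
    then have "reduced v" and "v = [] \<or> hd v \<noteq> letter_inverse b"
      by (auto simp: reduced_def successively_Cons)
    with Cons.IH have "word_map f v z \<in> In b" and bound: "2 ^ length v * norm z \<le> norm (word_map f v z)"
      by blast+
    then have "f b (word_map f v z) \<in> Out b" and "2 * norm (word_map f v z) \<le> norm (f b (word_map f v z))"
      using maps by blast+
    with nested bound show ?case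
      by auto
  qed
  then show ?thesis ..
qed

lemma ping_pong_reduce_word:
  fixes f :: "letter \<Rightarrow> 'a::real_normed_vector \<Rightarrow> 'a"
  assumes cancel: "\<And>a. f a \<circ> f (letter_inverse a) = id"
    and maps: "\<And>l z. z \<in> In l \<Longrightarrow> f l z \<in> Out l \<and> 2 * norm z \<le> norm (f l z)"
    and nested: "\<And>a b. b \<noteq> letter_inverse a \<Longrightarrow> Out b \<subseteq> In a"
    and z: "\<And>l. z \<in> In l" and "1 \<le> norm z"
  shows "real (length (reduce_word w)) \<le> norm (word_map f w z)"
proof -
  let ?n = "length (reduce_word w)"
  have "real ?n \<le> 2 ^ ?n"
    by (metis less_exp less_imp_le of_nat_le_iff of_nat_numeral of_nat_power)
  also have "\<dots> \<le> 2 ^ ?n * norm z"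
    using \<open>1 \<le> norm z\<close> by simp
  also have "\<dots> \<le> norm (word_map f (reduce_word w) z)"
    using maps nested z reduced_reduce_word by (rule ping_pong)
  also have "\<dots> = norm (word_map f w z)"
    by (simp add: word_map_reduce_word cancel)
  finally show ?thesis .
qed

lemma letter_map_cancel:
  assumes "\<delta> \<noteq> 0"
  shows "letter_map P \<delta> \<theta> a \<circ> letter_map P \<delta> \<theta> (letter_inverse a) = id"
proof -
  have "bij (henon P \<delta>)" and "bij (henon2 P \<delta> \<theta>)"
    using assms by (simp_all add: bij_henon henon2_eq bij_comp bij_rot)
  then show ?thesis
    by (cases a) (simp_all add: letter_map_def bij_is_inj bij_is_surj flip: inj_iff surj_iff)
qed

lemma S_map_eq_word_map: "S_map P \<delta> \<theta> \<omega> k = word_map (letter_map P \<delta> \<theta>) (S_word \<omega> k)"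
  by (induction k) (simp_all add: S_word_def)

lemma gen_group_subset_word_maps:
  "gen_group (henon P \<delta>) (henon2 P \<delta> \<theta>) \<subseteq> range (word_map (letter_map P \<delta> \<theta>))"
proof
  have letters: "letter_map P \<delta> \<theta> H1 = henon P \<delta>" "letter_map P \<delta> \<theta> H2 = henon2 P \<delta> \<theta>"
    "letter_map P \<delta> \<theta> H1inv = inv (henon P \<delta>)" "letter_map P \<delta> \<theta> H2inv = inv (henon2 P \<delta> \<theta>)"
    by (simp_all add: letter_map_def)
  have step: "letter_map P \<delta> \<theta> l \<circ> h \<in> range (word_map (letter_map P \<delta> \<theta>))"
    if "h \<in> range (word_map (letter_map P \<delta> \<theta>))" for l h
  proof -
    from that obtain w where "h = word_map (letter_map P \<delta> \<theta>) w"
      by blast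
    then have "letter_map P \<delta> \<theta> l \<circ> h = word_map (letter_map P \<delta> \<theta>) (l # w)"
      by simp
    then show ?thesis
      by (metis rangeI)
  qed
  fix h assume "h \<in> gen_group (henon P \<delta>) (henon2 P \<delta> \<theta>)"
  then show "h \<in> range (word_map (letter_map P \<delta> \<theta>))"
  proof (induction rule: gen_group.induct)
    case gen_id
    have "word_map (letter_map P \<delta> \<theta>) [] = id"
      by simp
    then show ?case
      by (metis rangeI)
  qed (use step[of _ H1, unfolded letters] step[of _ H2, unfolded letters]
      step[of _ H1inv, unfolded letters] step[of _ H2inv, unfolded letters] in blast)+
qed

lemma finite_UNIV_letter: "finite (UNIV :: letter set)"
proof -
  have "UNIV = {H1, H2, H1inv, H2inv}"
    using letter.exhaust by blast
  then show ?thesis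
    by (metis finite.emptyI finite_insert)
qed

section \<open>The escaping region and normality\<close>

lemma continuous_on_chart [continuous_intros]: "continuous_on S (chart \<theta> l)"
proof -
  have rot: "continuous_on T (rot \<theta>)" and swap: "continuous_on T swap" for T
    unfolding rot_def swap_def case_prod_unfold by (intro continuous_intros)+
  have "continuous_on S (swap \<circ> rot \<theta>)"
    using rot swap by (rule continuous_on_compose)
  with rot swap show ?thesis
    by (cases l) (simp_all only: chart_def letter.case continuous_on_id')
qed

lemma norm_chart_isotropic:
  "norm (fst (chart \<theta> l (w, \<i> * w))) = norm w \<and> norm (snd (chart \<theta> l (w, \<i> * w))) = norm w"
  by (cases l) (simp_all add: chart_def rot_isotropic swap_def norm_mult)

definition common_cone :: "real \<Rightarrow> real \<Rightarrow> real \<Rightarrow> C2 set" where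
  "common_cone \<theta> K r =
     {z. r < norm z \<and> (\<forall>l. norm (fst (chart \<theta> l z)) < K * norm (snd (chart \<theta> l z)))}"

lemma common_cone_subset_vert_cone: "z \<in> common_cone \<theta> K r \<Longrightarrow> chart \<theta> l z \<in> vert_cone K r"
  by (auto simp: common_cone_def vert_cone_def less_imp_le)

lemma open_common_cone: "open (common_cone \<theta> K r)"
proof -
  have "common_cone \<theta> K r = {z. r < norm z} \<inter>
      (\<Inter>l. {z. norm (fst (chart \<theta> l z)) < K * norm (snd (chart \<theta> l z))})"
    by (auto simp: common_cone_def)
  then show ?thesis
    by (simp add: finite_UNIV_letter open_Int open_INT open_Collect_less continuous_intros)
qed

lemma isotropic_mem_common_cone:
  assumes "1 < K" and "0 \<le> r" and "r < t"
  shows "(complex_of_real t, \<i> * complex_of_real t) \<in> common_cone \<theta> K r"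
proof -
  let ?z = "(complex_of_real t, \<i> * complex_of_real t)"
  have "\<bar>t\<bar> \<le> norm ?z"
    using norm_fst_le[of "complex_of_real t" "\<i> * complex_of_real t"] by simp
  moreover have "\<bar>t\<bar> < K * \<bar>t\<bar>"
    using assms by simp
  ultimately show ?thesis
    using assms norm_chart_isotropic[of \<theta> _ "complex_of_real t"]
    by (auto simp: common_cone_def)
qed

lemma common_cone_nonempty_unbounded:
  assumes "1 < K" and "0 \<le> r"
  shows "common_cone \<theta> K r \<noteq> {}" and "\<not> bounded (common_cone \<theta> K r)"
proof -
  show "common_cone \<theta> K r \<noteq> {}"
    using isotropic_mem_common_cone[OF assms, of "r + 1"] by auto
  show "\<not> bounded (common_cone \<theta> K r)"
  proof
    assume "bounded (common_cone \<theta> K r)"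
    then obtain B where B: "\<And>z. z \<in> common_cone \<theta> K r \<Longrightarrow> norm z \<le> B"
      by (auto simp: bounded_iff)
    define t where "t = max (r + 1) (B + 1)"
    have "0 < t" "r < t" "B < t"
      using assms by (simp_all add: t_def)
    then have "norm (complex_of_real t, \<i> * complex_of_real t) \<le> B"
      using B isotropic_mem_common_cone[OF assms] by blast
    moreover have "t \<le> norm (complex_of_real t, \<i> * complex_of_real t)"
      using norm_fst_le[of "complex_of_real t" "\<i> * complex_of_real t"] \<open>0 < t\<close> by simp
    ultimately show False
      using \<open>B < t\<close> by linarith
  qed
qed

lemma word_maps_expand_on_common_cone:
  fixes P :: "complex poly"
  assumes "degree P \<ge> 2" and "\<delta> \<noteq> 0" and "sin \<theta> \<noteq> 0" and "cos \<theta> \<noteq> 0"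
  obtains K r where "1 < K" and "0 \<le> r"
    and "\<And>z w. z \<in> common_cone \<theta> K r \<Longrightarrow>
           real (length (reduce_word w)) \<le> norm (word_map (letter_map P \<delta> \<theta>) w z)"
proof -
  define m where "m = min \<bar>cos \<theta>\<bar> \<bar>sin \<theta>\<bar>"
  define K where "K = 1 + 2 / m"
  have "0 < m" and "1 < K"
    using assms(3,4) by (simp_all add: m_def K_def)
  have m: "m \<le> \<bar>cos \<theta>\<bar>" "m \<le> \<bar>sin \<theta>\<bar>"
    by (simp_all add: m_def)
  have deg: "degree (smult (1 / \<delta>) P) \<ge> 2"
    using assms(1,2) by simp
  let ?maps = "{(P, \<delta>), (smult (1 / \<delta>) P, 1 / \<delta>)}"
  have "\<forall>QD \<in> ?maps. eventually (\<lambda>r. \<forall>z \<in> vert_cone K r. henon (fst QD) (snd QD) z \<in> vert_cone (m / 2) r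
      \<and> 2 * norm z \<le> norm (henon (fst QD) (snd QD) z)) at_top"
    using eventually_henon_vert_cone_step[OF assms(1), of K "m / 2"]
      eventually_henon_vert_cone_step[OF deg, of K "m / 2"]
      \<open>0 < m\<close> \<open>1 < K\<close> by simp
  then have "eventually (\<lambda>r. 1 \<le> r \<and> (\<forall>QD \<in> ?maps. \<forall>z \<in> vert_cone K r.
      henon (fst QD) (snd QD) z \<in> vert_cone (m / 2) r \<and> 2 * norm z \<le> norm (henon (fst QD) (snd QD) z))) at_top"
    by (intro eventually_conj eventually_ge_at_top eventually_ball_finite) auto
  then obtain r where "1 \<le> r" and henon_step: "\<forall>QD \<in> ?maps. \<forall>z \<in> vert_cone K r.
      henon (fst QD) (snd QD) z \<in> vert_cone (m / 2) r \<and> 2 * norm z \<le> norm (henon (fst QD) (snd QD) z)"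
    using eventually_happens'[OF trivial_limit_at_top_linorder] by blast
  have "henon Q D z \<in> vert_cone (m / 2) r \<and> 2 * norm z \<le> norm (henon Q D z)"
    if "(Q, D) \<in> ?maps" and "z \<in> vert_cone K r" for Q D z
    using bspec[OF bspec[OF henon_step that(1)] that(2)] by simp
  note letter_step = letter_map_vert_cone_step[OF assms(2) this]
  have nested: "{z. chart \<theta> b z \<in> vert_cone (m / 2) r} \<subseteq> {z. chart \<theta> a z \<in> vert_cone K r}"
    if "b \<noteq> letter_inverse a" for a b
    using chart_vert_cone_transfer[OF \<open>0 < m\<close> m that] by (auto simp: K_def)
  show ?thesis
  proof (rule that[OF \<open>1 < K\<close>, of r])
    fix z w assume z: "z \<in> common_cone \<theta> K r"
    have maps: "x \<in> {z. chart \<theta> l z \<in> vert_cone K r} \<Longrightarrow>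
        letter_map P \<delta> \<theta> l x \<in> {z. chart \<theta> l z \<in> vert_cone (m / 2) r}
        \<and> 2 * norm x \<le> norm (letter_map P \<delta> \<theta> l x)" for l x
      using letter_step by simp
    have z_in: "z \<in> {z. chart \<theta> l z \<in> vert_cone K r}" for l
      using common_cone_subset_vert_cone[OF z] by simp
    have "1 \<le> norm z"
      using z \<open>1 \<le> r\<close> by (simp add: common_cone_def)
    with letter_map_cancel[OF assms(2)] maps nested z_in
    show "real (length (reduce_word w)) \<le> norm (word_map (letter_map P \<delta> \<theta>) w z)"
      by (rule ping_pong_reduce_word)
  qed (use \<open>1 \<le> r\<close> in simp)
qed

lemma normal_family_on_if_finite_sublevels:
  assumes "\<And>M. finite {f \<in> A. \<exists>z\<in>W. norm (f z) < M}"
  shows "normal_family_on A W"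
  unfolding normal_family_on_def
proof (intro allI impI)
  fix f :: "nat \<Rightarrow> 'a \<Rightarrow> 'b" assume f: "\<forall>n. f n \<in> A"
  show "\<exists>r. strict_mono r \<and>
           ((\<exists>g. \<forall>K. compact K \<and> K \<subseteq> W \<longrightarrow> uniform_limit K (\<lambda>n. f (r n)) g sequentially)
            \<or> (\<forall>K. compact K \<and> K \<subseteq> W \<longrightarrow>
                  (\<forall>M. eventually (\<lambda>n. \<forall>z\<in>K. norm (f (r n) z) \<ge> M) sequentially)))"
  proof (cases "\<forall>M. eventually (\<lambda>n. \<forall>z\<in>W. M \<le> norm (f n z)) sequentially")
    case True
    have "eventually (\<lambda>n. \<forall>z\<in>K. M \<le> norm (f (id n) z)) sequentially" if "K \<subseteq> W" for K M
      using True[rule_format, of M] by (rule eventually_mono) (use that in auto)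
    then show ?thesis
      using strict_mono_id by blast
  next
    case False
    then obtain M where "\<not> eventually (\<lambda>n. \<forall>z\<in>W. M \<le> norm (f n z)) sequentially"
      by blast
    then have S: "infinite {n. \<exists>z\<in>W. norm (f n z) < M}"
      by (simp add: cofinite_eq_sequentially[symmetric] eventually_cofinite not_le)
    have "f ` {n. \<exists>z\<in>W. norm (f n z) < M} \<subseteq> {g \<in> A. \<exists>z\<in>W. norm (g z) < M}"
      using f by auto
    then have "finite (f ` {n. \<exists>z\<in>W. norm (f n z) < M})"
      using assms finite_subset by blast
    then obtain n0 where "infinite {n \<in> {n. \<exists>z\<in>W. norm (f n z) < M}. f n = f n0}"
      using pigeonhole_infinite[OF S] by blast
    then obtain r :: "nat \<Rightarrow> nat" where r: "strict_mono r" "\<And>n. f (r n) = f n0"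
      using infinite_enumerate by blast
    have "\<forall>K. uniform_limit K (\<lambda>n. f (r n)) (f n0) sequentially"
      by (simp add: r(2) uniform_limit_const)
    then show ?thesis
      using r(1) by blast
  qed
qed

lemma normal_family_on_gen_group:
  assumes "\<delta> \<noteq> 0"
    and "\<And>z w. z \<in> U \<Longrightarrow> real (length (reduce_word w)) \<le> norm (word_map (letter_map P \<delta> \<theta>) w z)"
  shows "normal_family_on (gen_group (henon P \<delta>) (henon2 P \<delta> \<theta>)) U"
proof (rule normal_family_on_if_finite_sublevels)
  fix M :: real
  let ?F = "word_map (letter_map P \<delta> \<theta>)"
  let ?words = "{w. set w \<subseteq> UNIV \<and> length w \<le> nat \<lceil>M\<rceil>}"
  have "{f \<in> gen_group (henon P \<delta>) (henon2 P \<delta> \<theta>). \<exists>z\<in>U. norm (f z) < M} \<subseteq> ?F ` ?words"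
  proof clarify
    fix f z assume "f \<in> gen_group (henon P \<delta>) (henon2 P \<delta> \<theta>)" "z \<in> U" "norm (f z) < M"
    then obtain w where f: "f = ?F w"
      using gen_group_subset_word_maps by blast
    then have "f = ?F (reduce_word w)"
      by (simp add: word_map_reduce_word letter_map_cancel assms(1))
    moreover have "norm (?F w z) < M"
      using f \<open>norm (f z) < M\<close> by simp
    then have "real (length (reduce_word w)) \<le> real (nat \<lceil>M\<rceil>)"
      using assms(2)[OF \<open>z \<in> U\<close>, of w] real_nat_ceiling_ge[of M] by linarith
    then have "reduce_word w \<in> ?words"
      by simp
    ultimately show "f \<in> ?F ` ?words"
      by blast
  qed
  then show "finite {f \<in> gen_group (henon P \<delta>) (henon2 P \<delta> \<theta>). \<exists>z\<in>U. norm (f z) < M}"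
    using finite_lists_length_le[OF finite_UNIV_letter] finite_subset by blast
qed

lemma sin_cos_nonzero:
  assumes "0 < \<theta>" "\<theta> < 2 * pi" "\<theta> \<noteq> pi / 2" "\<theta> \<noteq> pi" "\<theta> \<noteq> 3 * pi / 2"
  shows "sin \<theta> \<noteq> 0" and "cos \<theta> \<noteq> 0"
proof -
  have "sin (2 * \<theta>) \<noteq> 0"
  proof
    assume "sin (2 * \<theta>) = 0"
    then obtain i :: int where i: "2 * \<theta> = of_int i * pi"
      by (auto simp: sin_zero_iff_int2)
    then have "0 < of_int i * pi" "of_int i * pi < 4 * pi"
      using assms(1,2) by linarith+
    then have "0 < i" "i < 4"
      by (simp_all add: zero_less_mult_iff mult_less_cancel_right)
    then have "i = 1 \<or> i = 2 \<or> i = 3"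
      by linarith
    then have "2 * \<theta> = pi \<or> 2 * \<theta> = 2 * pi \<or> 2 * \<theta> = 3 * pi"
      using i by auto
    then show False
      using assms(3-5) by linarith
  qed
  then show "sin \<theta> \<noteq> 0" and "cos \<theta> \<noteq> 0"
    by (simp_all add: sin_double)
qed

theorem theoremA:
  fixes P :: "complex poly" and \<delta> :: complex and \<theta> :: real
  assumes "degree P \<ge> 2"
    and "\<delta> \<noteq> 0"
    and "0 < \<theta>" and "\<theta> < 2 * pi"
    and "\<theta> \<noteq> pi / 2" and "\<theta> \<noteq> pi" and "\<theta> \<noteq> 3 * pi / 2"
  shows "\<exists>U. open U \<and> U \<noteq> {} \<and> \<not> bounded U \<and>
           U \<subseteq> fatou_set (gen_group (henon P \<delta>) (henon2 P \<delta> \<theta>)) \<and>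
           (\<forall>z\<in>U. \<forall>\<omega> :: nat \<Rightarrow> letter.
              filterlim (\<lambda>k. length (reduce_word (S_word \<omega> k))) at_top sequentially \<longrightarrow>
              filterlim (\<lambda>k. norm (S_map P \<delta> \<theta> \<omega> k z)) at_top sequentially)"
proof -
  obtain K r where K: "1 < K" "0 \<le> r" and expand: "\<And>z w. z \<in> common_cone \<theta> K r \<Longrightarrow>
      real (length (reduce_word w)) \<le> norm (word_map (letter_map P \<delta> \<theta>) w z)"
    using word_maps_expand_on_common_cone[OF assms(1,2) sin_cos_nonzero[OF assms(3-7)]] by blast
  have "normal_family_on (gen_group (henon P \<delta>) (henon2 P \<delta> \<theta>)) (common_cone \<theta> K r)"
    using assms(2) expand by (rule normal_family_on_gen_group)
  then have fatou: "common_cone \<theta> K r \<subseteq> fatou_set (gen_group (henon P \<delta>) (henon2 P \<delta> \<theta>))"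
    unfolding fatou_set_def by (intro Union_upper) (simp add: open_common_cone)
  have escape: "\<forall>z\<in>common_cone \<theta> K r. \<forall>\<omega> :: nat \<Rightarrow> letter.
      filterlim (\<lambda>k. length (reduce_word (S_word \<omega> k))) at_top sequentially \<longrightarrow>
      filterlim (\<lambda>k. norm (S_map P \<delta> \<theta> \<omega> k z)) at_top sequentially"
  proof (intro ballI allI impI)
    fix z \<omega> assume z: "z \<in> common_cone \<theta> K r"
      and "filterlim (\<lambda>k. length (reduce_word (S_word \<omega> k))) at_top sequentially"
    then have "filterlim (\<lambda>k. real (length (reduce_word (S_word \<omega> k)))) at_top sequentially"
      using filterlim_compose[OF filterlim_real_sequentially] by blast
    moreover have "\<forall>k. real (length (reduce_word (S_word \<omega> k))) \<le> norm (S_map P \<delta> \<theta> \<omega> k z)"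
      by (simp add: S_map_eq_word_map expand z)
    ultimately show "filterlim (\<lambda>k. norm (S_map P \<delta> \<theta> \<omega> k z)) at_top sequentially"
      by (auto intro: filterlim_at_top_mono)
  qed
  show ?thesis
    by (intro exI[of _ "common_cone \<theta> K r"] conjI open_common_cone common_cone_nonempty_unbounded[OF K]
        fatou escape)
qed

end
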